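(* Let $a:\mathbb{R}\to\mathbb{R}$ be smooth with $a'(u)\neq 0$, let $h$ satisfy $h''=a$, and let $\alpha,\beta\in\mathbb{R}$. Define $$c=\frac{\alpha}{a'},\qquad p=\frac{\beta}{2a'}-\frac{3\alpha^2}{10}\frac{a''}{(a')^3},$$ $$s=\alpha^2\left(\frac{2}{5}\frac{(a'')^3}{(a')^5}-\frac{7}{20}\frac{a''a'''}{(a')^4}+\frac{1}{24}\frac{a''''}{(a')^3}\right)-\frac{\beta}{12}\left(\frac{(a'')^2}{(a')^3}-\frac{a'''}{(a')^2}\right),$$ all evaluated at $u$. Let $$\tilde h=h-\frac{\varepsilon^2}{2}c\,h'''u_x^2+\varepsilon^4\Big[\Big(p\,h'''+\tfrac{3}{10}c^2h^{(4)}\Big)u_{xx}^2-\Big(\tfrac{c\,c''}{8}h^{(4)}+\tfrac{c\,c'}{8}h^{(5)}+\tfrac{c^2}{24}h^{(6)}+\tfrac{p'}{6}h^{(4)}+\tfrac{p}{6}h^{(5)}-s\,h'''\Big)u_x^4\Big]$$ and $\tilde H=\int\tilde h(u,u_x,u_{xx};\varepsilon)\,dx$. Then the Hamiltonian equation $$u_t=\partial_x\frac{\delta\tilde H}{\delta u(x)}$$ coincides with $$u_t=a(u)\,u_x+\varepsilon^2\alpha\,u_{xxx}+\varepsilon^4\beta\,u_{xxxxx}.$$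
   Context: Primes on $a,c,p,h$ denote derivatives with respect to $u$. For a local functional $H=\int h(u,u_x,u_{xx},\dots)\,dx$, the variational derivative is $\frac{\delta H}{\delta u(x)}=\sum_{k\geq 0}(-1)^k\frac{d^k}{dx^k}\frac{\partial h}{\partial u^{(k)}_x}$, where $u^{(k)}_x$ is the $k$-th $x$-derivative of $u$ and $\frac{d}{dx}$ is the total $x$-derivative. The identity is meant as an identity of differential polynomials (rational in $u$-dependence) in each power of $\varepsilon$. *)

theory Defs
  imports "HOL-Analysis.Analysis"
begin

definition smooth :: "(real \<Rightarrow> real) \<Rightarrow> bool" where
  "smooth f \<longleftrightarrow> (\<forall>n x. ((deriv ^^ n) f) differentiable (at x))"

definition cfun :: "(real \<Rightarrow> real) \<Rightarrow> real \<Rightarrow> real \<Rightarrow> real" where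
  "cfun a \<alpha> v = \<alpha> / deriv a v"

definition pfun :: "(real \<Rightarrow> real) \<Rightarrow> real \<Rightarrow> real \<Rightarrow> real \<Rightarrow> real" where
  "pfun a \<alpha> \<beta> v = \<beta> / (2 * deriv a v)
     - 3 * \<alpha>^2 / 10 * ((deriv ^^ 2) a v / (deriv a v)^3)"

definition sfun :: "(real \<Rightarrow> real) \<Rightarrow> real \<Rightarrow> real \<Rightarrow> real \<Rightarrow> real" where
  "sfun a \<alpha> \<beta> v =
     \<alpha>^2 * (2/5 * ((deriv ^^ 2) a v)^3 / (deriv a v)^5
            - 7/20 * (deriv ^^ 2) a v * (deriv ^^ 3) a v / (deriv a v)^4
            + 1/24 * (deriv ^^ 4) a v / (deriv a v)^3)
     - \<beta> / 12 * (((deriv ^^ 2) a v)^2 / (deriv a v)^3 - (deriv ^^ 3) a v / (deriv a v)^2)"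

text \<open>The deformed Hamiltonian density h~(u, u_x, u_xx; eps), with arguments eps, u, ux, uxx.\<close>
definition htilde :: "(real \<Rightarrow> real) \<Rightarrow> (real \<Rightarrow> real) \<Rightarrow> real \<Rightarrow> real \<Rightarrow> real
                      \<Rightarrow> real \<Rightarrow> real \<Rightarrow> real \<Rightarrow> real" where
  "htilde a h \<alpha> \<beta> \<epsilon> v v1 v2 =
     (let c = cfun a \<alpha>; p = pfun a \<alpha> \<beta>; s = sfun a \<alpha> \<beta>;
          hd = (\<lambda>k. (deriv ^^ k) h v)
      in h v - \<epsilon>^2 / 2 * c v * hd 3 * v1^2
         + \<epsilon>^4 * ((p v * hd 3 + 3/10 * (c v)^2 * hd 4) * v2^2
                  - (c v * (deriv ^^ 2) c v / 8 * hd 4 + c v * deriv c v / 8 * hd 5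
                     + (c v)^2 / 24 * hd 6 + deriv p v / 6 * hd 4 + p v / 6 * hd 5
                     - s v * hd 3) * v1^4))"

text \<open>Variational derivative of the local functional with density f(u, u_x, u_xx),
  evaluated along the function u at the point x:
  df/du - d/dx (df/du_x) + d^2/dx^2 (df/du_xx).\<close>
definition var_deriv2 :: "(real \<Rightarrow> real \<Rightarrow> real \<Rightarrow> real) \<Rightarrow> (real \<Rightarrow> real) \<Rightarrow> real \<Rightarrow> real" where
  "var_deriv2 f u x =
     deriv (\<lambda>w. f w (deriv u x) ((deriv ^^ 2) u x)) (u x)
     - deriv (\<lambda>y. deriv (\<lambda>w. f (u y) w ((deriv ^^ 2) u y)) (deriv u y)) x
     + (deriv ^^ 2) (\<lambda>y. deriv (\<lambda>w. f (u y) (deriv u y) w) ((deriv ^^ 2) u y)) x"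

end

theory Submission
  imports Defs
begin

(* The correction terms of the deformed density are built so that, once
   h'' = a is used, all u-dependence of the coefficients cancels:
     c h''' = alpha,   p h''' + 3/10 c^2 h'''' = beta/2,   and the u_x^4 coefficient is 0.
   Hence  htilde = h(u) - eps^2 alpha/2 u_x^2 + eps^4 beta/2 u_xx^2  (htilde_quadratic);
   this is a finite computation with the derivatives of c and p (deriv_cfun, ...).
   For a quadratic density  H(u) + A u_x^2 + B u_xx^2  the variational derivative is
   H'(u) - 2A u_xx + 2B u_xxxx  (var_deriv2_quadratic).  Differentiating once more in x
   with H'' = a gives the claimed equation a(u) u_x + eps^2 alpha u_xxx + eps^4 beta u_xxxxx. *)

lemma smooth_has_deriv_iter:
  "smooth f \<Longrightarrow> ((deriv ^^ n) f has_real_derivative (deriv ^^ Suc n) f x) (at x)"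
  unfolding smooth_def using DERIV_deriv_iff_real_differentiable by fastforce

lemma smooth_has_deriv: "smooth f \<Longrightarrow> (f has_real_derivative deriv f x) (at x)"
  using smooth_has_deriv_iter[of f 0 x] by simp

lemma smooth_has_deriv_23:
  assumes "smooth f"
  shows "(deriv f has_real_derivative (deriv ^^ 2) f x) (at x)"
    and "((deriv ^^ 2) f has_real_derivative (deriv ^^ 3) f x) (at x)"
  using smooth_has_deriv_iter[OF assms, of 1 x] smooth_has_deriv_iter[OF assms, of 2 x]
  by (simp_all add: eval_nat_numeral)

lemma deriv_iter_cmult:
  assumes "smooth f"
  shows "(deriv ^^ m) (\<lambda>y. K * (deriv ^^ n) f y) = (\<lambda>y. K * (deriv ^^ (m + n)) f y)"
proof (induction m)
  case 0
  show ?case by simp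
next
  case (Suc m)
  have "deriv (\<lambda>y. K * (deriv ^^ (m + n)) f y) = (\<lambda>y. K * (deriv ^^ Suc (m + n)) f y)"
    by (rule ext, rule DERIV_imp_deriv, rule DERIV_cmult, rule smooth_has_deriv_iter[OF assms])
  with Suc show ?case by simp
qed

lemma deriv_iter_antiderivative:
  "(deriv ^^ 2) h = a \<Longrightarrow> (deriv ^^ (k + 2)) h = (deriv ^^ k) a"
  by (metis comp_apply funpow_add)

lemma deriv_cfun:
  assumes sa: "smooth a" and nz: "\<And>v. deriv a v \<noteq> 0"
  shows "deriv (cfun a \<alpha>) = (\<lambda>v. - \<alpha> * (deriv ^^ 2) a v / (deriv a v)^2)"
  unfolding cfun_def
  apply (rule ext, rule DERIV_imp_deriv)
  apply (rule derivative_eq_intros smooth_has_deriv_23[OF sa] | simp add: nz)+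
  apply (simp add: field_simps power2_eq_square nz)
  done

lemma deriv2_cfun:
  assumes sa: "smooth a" and nz: "\<And>v. deriv a v \<noteq> 0"
  shows "(deriv ^^ 2) (cfun a \<alpha>) v
    = - \<alpha> * ((deriv ^^ 3) a v / (deriv a v)^2 - 2 * ((deriv ^^ 2) a v)^2 / (deriv a v)^3)"
proof -
  have "deriv (\<lambda>v. - \<alpha> * (deriv ^^ 2) a v / (deriv a v)^2) v
      = - \<alpha> * ((deriv ^^ 3) a v / (deriv a v)^2 - 2 * ((deriv ^^ 2) a v)^2 / (deriv a v)^3)"
    apply (rule DERIV_imp_deriv)
    apply (rule derivative_eq_intros smooth_has_deriv_23[OF sa] | simp add: nz)+
    apply (simp add: field_simps power2_eq_square nz eval_nat_numeral)
    done
  then show ?thesis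
    using deriv_cfun[OF sa nz] by (simp add: eval_nat_numeral)
qed

lemma deriv_pfun:
  assumes sa: "smooth a" and nz: "\<And>v. deriv a v \<noteq> 0"
  shows "deriv (pfun a \<alpha> \<beta>) v = - \<beta> * (deriv ^^ 2) a v / (2 * (deriv a v)^2)
    - 3 * \<alpha>^2 / 10 * ((deriv ^^ 3) a v / (deriv a v)^3 - 3 * ((deriv ^^ 2) a v)^2 / (deriv a v)^4)"
  unfolding pfun_def
  apply (rule DERIV_imp_deriv)
  apply (rule derivative_eq_intros smooth_has_deriv_23[OF sa] | simp add: nz)+
  apply (simp add: field_simps power2_eq_square nz eval_nat_numeral)
  done

lemma htilde_quadratic:
  assumes sa: "smooth a" and nz: "\<And>v. deriv a v \<noteq> 0" and h2: "(deriv ^^ 2) h = a"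
  shows "htilde a h \<alpha> \<beta> \<epsilon> v v1 v2 = h v - \<epsilon>^2 / 2 * \<alpha> * v1^2 + \<epsilon>^4 * \<beta> / 2 * v2^2"
proof -
  have h_derivs: "(deriv ^^ 3) h = deriv a" "(deriv ^^ 4) h = (deriv ^^ 2) a"
    "(deriv ^^ 5) h = (deriv ^^ 3) a" "(deriv ^^ 6) h = (deriv ^^ 4) a"
    using deriv_iter_antiderivative[OF h2, of 1] deriv_iter_antiderivative[OF h2, of 2]
      deriv_iter_antiderivative[OF h2, of 3] deriv_iter_antiderivative[OF h2, of 4]
    by (simp_all add: eval_nat_numeral)
  show ?thesis
    unfolding htilde_def Let_def h_derivs deriv2_cfun[OF sa nz] deriv_cfun[OF sa nz]
      deriv_pfun[OF sa nz] cfun_def pfun_def sfun_def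
    using nz[of v] by (simp add: field_simps eval_nat_numeral)
qed

lemma var_deriv2_quadratic:
  fixes H H' :: "real \<Rightarrow> real" and A B :: real
  assumes su: "smooth u" and dH: "\<And>w. (H has_real_derivative H' w) (at w)"
  shows "var_deriv2 (\<lambda>w v1 v2. H w + A * v1^2 + B * v2^2) u
    = (\<lambda>x. H' (u x) - 2 * A * (deriv ^^ 2) u x + 2 * B * (deriv ^^ 4) u x)"
proof -
  have dw: "deriv (\<lambda>w. H w + A * v1^2 + B * v2^2) v = H' v" for v1 v2 v
    by (rule DERIV_imp_deriv) (rule derivative_eq_intros dH | simp)+
  have dv1: "deriv (\<lambda>w. H v + A * w^2 + B * v2^2) v1 = (2 * A) * v1" for v v1 v2
    by (rule DERIV_imp_deriv) (rule derivative_eq_intros | simp)+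
  have dv2: "deriv (\<lambda>w. H v + A * v1^2 + B * w^2) v2 = (2 * B) * v2" for v v1 v2
    by (rule DERIV_imp_deriv) (rule derivative_eq_intros | simp)+
  have "deriv (\<lambda>y. (2 * A) * (deriv ^^ 1) u y) = (\<lambda>y. (2 * A) * (deriv ^^ 2) u y)"
    using deriv_iter_cmult[OF su, of 1 "2 * A" 1] by (simp add: numeral_2_eq_2)
  moreover have "(deriv ^^ 2) (\<lambda>y. (2 * B) * (deriv ^^ 2) u y) = (\<lambda>y. (2 * B) * (deriv ^^ 4) u y)"
    using deriv_iter_cmult[OF su, of 2 "2 * B" 2] by simp
  ultimately show ?thesis
    unfolding var_deriv2_def dw dv1 dv2 by (simp add: algebra_simps)
qed

theorem mainTheorem7:
  fixes a h :: "real \<Rightarrow> real" and \<alpha> \<beta> :: real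
  assumes "smooth a"
    and "\<And>v. deriv a v \<noteq> 0"
    and "smooth h"
    and "(deriv ^^ 2) h = a"
  shows "\<forall>u \<epsilon> x. smooth u \<longrightarrow>
           deriv (var_deriv2 (htilde a h \<alpha> \<beta> \<epsilon>) u) x
             = a (u x) * deriv u x + \<epsilon>^2 * \<alpha> * (deriv ^^ 3) u x
               + \<epsilon>^4 * \<beta> * (deriv ^^ 5) u x"
proof (intro allI impI)
  fix u :: "real \<Rightarrow> real" and \<epsilon> x :: real
  assume su: "smooth u"
  have "htilde a h \<alpha> \<beta> \<epsilon> = (\<lambda>w v1 v2. h w + (- (\<epsilon>^2 / 2 * \<alpha>)) * v1^2 + (\<epsilon>^4 * \<beta> / 2) * v2^2)"
    using htilde_quadratic[OF assms(1,2,4)] by (intro ext) simp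
  then have vd: "var_deriv2 (htilde a h \<alpha> \<beta> \<epsilon>) u
      = (\<lambda>x. deriv h (u x) + \<epsilon>^2 * \<alpha> * (deriv ^^ 2) u x + \<epsilon>^4 * \<beta> * (deriv ^^ 4) u x)"
    using var_deriv2_quadratic[OF su smooth_has_deriv[OF assms(3)],
        of "- (\<epsilon>^2 / 2 * \<alpha>)" "\<epsilon>^4 * \<beta> / 2"]
    by (simp only:) simp
  have dh: "(deriv h has_real_derivative a w) (at w)" for w
    using smooth_has_deriv_iter[OF assms(3), of 1 w] assms(4) by (simp add: numeral_2_eq_2)
  show "deriv (var_deriv2 (htilde a h \<alpha> \<beta> \<epsilon>) u) x
      = a (u x) * deriv u x + \<epsilon>^2 * \<alpha> * (deriv ^^ 3) u x + \<epsilon>^4 * \<beta> * (deriv ^^ 5) u x"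
    unfolding vd
    by (rule DERIV_imp_deriv)
      (rule derivative_eq_intros DERIV_chain2[OF dh] smooth_has_deriv[OF su]
        smooth_has_deriv_iter[OF su] | simp)+
qed

end
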